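(* Let $X$ be a Banach space, $(A_n)_{n\in\mathbb{Z}}$ bounded invertible operators on $X$, $(P_n)_{n\in\mathbb{Z}}$ bounded operators on $X$, and $f_n\colon X\to X$ maps. Assume: there are $(\mu_n),(\gamma_n)\subset[0,\infty)$ with $|f_n(x)|\le\mu_n$ and $|f_n(x_1)-f_n(x_2)|\le\gamma_n|x_1-x_2|$ for all $n,x,x_1,x_2$; $\sup_m\sum_n|\mathcal G(m,n)|\mu_{n-1}<\infty$; $\sup_m\sum_n|\mathcal G(m,n)|\gamma_{n-1}<1$; $|A_n^{-1}|\gamma_n<1$ for all $n$; each $f_n$ is $C^r$ for some $r\ge1$; and for every $n\in\mathbb{Z}$, \[ \sum_{k<n}|\mathcal G(n,k+1)|\gamma_k\prod_{j=k}^{n-1}\frac{|A_j^{-1}|}{1-\gamma_j|A_j^{-1}|}+\sum_{k>n}|\mathcal G(n,k+1)|\gamma_k\prod_{j=n}^{k-1}(|A_j|+\gamma_j)+|\mathcal G(n,n+1)|\gamma_n<1. \] Then the maps $H_n$ and $\bar H_n$ (defined in the context) are of class $C^1$ for every $n\in\mathbb{Z}$.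
   Context: $\mathcal A(m,n)=A_{m-1}\cdots A_n$ ($m>n$), $\mathrm{Id}$ ($m=n$), $A_m^{-1}\cdots A_{n-1}^{-1}$ ($m<n$); $\mathcal G(m,n)=\mathcal A(m,n)P_n$ for $m\ge n$ and $-\mathcal A(m,n)(\mathrm{Id}-P_n)$ for $m<n$. $x_2(k,n,\xi)$ is the solution of $x_{k+1}=A_kx_k+f_k(x_k)$ with $x_2(n,n,\xi)=\xi$ (defined for all $k$). Set $\bar h_n(\xi)=-\sum_{k\in\mathbb{Z}}\mathcal G(n,k+1)f_k(x_2(k,n,\xi))$ and $\bar H_n(\xi)=\xi+\bar h_n(\xi)$; under the stated hypotheses it is known that $\bar H_n$ is a homeomorphism of $X$ taking solutions of $x_{k+1}=A_kx_k+f_k(x_k)$ to solutions of $x_{k+1}=A_kx_k$, and its inverse $H_n(\xi)=\xi+h_n(\xi)$ (with $h_n$ bounded and continuous) takes solutions of the linear system to those of the nonlinear system. *)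

theory Defs
  imports "HOL-Analysis.Analysis"
begin

text \<open>Inverse of a bounded linear operator (meaningful when it is invertible).\<close>
definition binv :: "('a::real_normed_vector \<Rightarrow>\<^sub>L 'a) \<Rightarrow> ('a \<Rightarrow>\<^sub>L 'a)" where
  "binv T = (SOME S. T o\<^sub>L S = id_blinfun \<and> S o\<^sub>L T = id_blinfun)"

fun cocyc_fwd :: "(int \<Rightarrow> ('a::real_normed_vector \<Rightarrow>\<^sub>L 'a)) \<Rightarrow> int \<Rightarrow> nat \<Rightarrow> ('a \<Rightarrow>\<^sub>L 'a)" where
  "cocyc_fwd A n 0 = id_blinfun"
| "cocyc_fwd A n (Suc k) = A (n + int k) o\<^sub>L cocyc_fwd A n k"

fun cocyc_bwd :: "(int \<Rightarrow> ('a::real_normed_vector \<Rightarrow>\<^sub>L 'a)) \<Rightarrow> int \<Rightarrow> nat \<Rightarrow> ('a \<Rightarrow>\<^sub>L 'a)" where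
  "cocyc_bwd A m 0 = id_blinfun"
| "cocyc_bwd A m (Suc k) = cocyc_bwd A m k o\<^sub>L binv (A (m + int k))"

definition cocycle :: "(int \<Rightarrow> ('a::real_normed_vector \<Rightarrow>\<^sub>L 'a)) \<Rightarrow> int \<Rightarrow> int \<Rightarrow> ('a \<Rightarrow>\<^sub>L 'a)" where
  "cocycle A m n = (if n \<le> m then cocyc_fwd A n (nat (m - n)) else cocyc_bwd A m (nat (n - m)))"

definition green :: "(int \<Rightarrow> ('a::real_normed_vector \<Rightarrow>\<^sub>L 'a)) \<Rightarrow> (int \<Rightarrow> ('a \<Rightarrow>\<^sub>L 'a)) \<Rightarrow> int \<Rightarrow> int \<Rightarrow> ('a \<Rightarrow>\<^sub>L 'a)" where
  "green A P m n = (if n \<le> m then cocycle A m n o\<^sub>L P n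
                    else - (cocycle A m n o\<^sub>L (id_blinfun - P n)))"

definition x2 :: "(int \<Rightarrow> ('a::real_normed_vector \<Rightarrow>\<^sub>L 'a)) \<Rightarrow> (int \<Rightarrow> 'a \<Rightarrow> 'a) \<Rightarrow> int \<Rightarrow> int \<Rightarrow> 'a \<Rightarrow> 'a" where
  "x2 A f k n \<xi> = (THE x. x n = \<xi> \<and> (\<forall>j. x (j + 1) = A j (x j) + f j (x j))) k"

definition hbar :: "(int \<Rightarrow> ('a::real_normed_vector \<Rightarrow>\<^sub>L 'a)) \<Rightarrow> (int \<Rightarrow> ('a \<Rightarrow>\<^sub>L 'a)) \<Rightarrow> (int \<Rightarrow> 'a \<Rightarrow> 'a) \<Rightarrow> int \<Rightarrow> 'a \<Rightarrow> 'a" where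
  "hbar A P f n \<xi> = - infsum (\<lambda>k. green A P n (k + 1) (f k (x2 A f k n \<xi>))) UNIV"

definition Hbar :: "(int \<Rightarrow> ('a::real_normed_vector \<Rightarrow>\<^sub>L 'a)) \<Rightarrow> (int \<Rightarrow> ('a \<Rightarrow>\<^sub>L 'a)) \<Rightarrow> (int \<Rightarrow> 'a \<Rightarrow> 'a) \<Rightarrow> int \<Rightarrow> 'a \<Rightarrow> 'a" where
  "Hbar A P f n \<xi> = \<xi> + hbar A P f n \<xi>"

definition H :: "(int \<Rightarrow> ('a::real_normed_vector \<Rightarrow>\<^sub>L 'a)) \<Rightarrow> (int \<Rightarrow> ('a \<Rightarrow>\<^sub>L 'a)) \<Rightarrow> (int \<Rightarrow> 'a \<Rightarrow> 'a) \<Rightarrow> int \<Rightarrow> 'a \<Rightarrow> 'a" where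
  "H A P f n = inv (Hbar A P f n)"

definition C1 :: "('a::real_normed_vector \<Rightarrow> 'b::real_normed_vector) \<Rightarrow> bool" where
  "C1 g \<longleftrightarrow> (\<exists>D :: 'a \<Rightarrow> ('a \<Rightarrow>\<^sub>L 'b).
      (\<forall>x. (g has_derivative blinfun_apply (D x)) (at x)) \<and> continuous_on UNIV D)"

end

theory Submission
  imports Defs
begin

(* Write hbar_n = sum_k u_k with u_k(xi) = -G(n,k+1) f_k(x_2(k,n,xi)). Each step map
   x |-> A_k x + f_k x is an invertible operator plus a C^1 perturbation of Lipschitz constant
   gamma_k < 1/|A_k^-1|, so it and its inverse are C^1 with derivatives bounded by |A_k| + gamma_k
   and |A_k^-1| / (1 - gamma_k |A_k^-1|). Iterating forwards and backwards, xi |-> x_2(k,n,xi) is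
   C^1 with derivative bounded by the corresponding products, and the hypothesis on these products
   says exactly that the termwise differentiated series converges uniformly with total bound q < 1.
   Hence hbar_n is C^1 with |D hbar_n| <= q, so Hbar_n = Id + hbar_n is a C^1 map whose derivative
   is a small perturbation of the identity, and the inverse function rule makes H_n C^1 as well. *)

lemma norm_derivative_le_lipschitz:
  fixes g :: "'a::real_normed_vector \<Rightarrow> 'b::real_normed_vector"
  assumes d: "(g has_derivative blinfun_apply D) (at x)"
    and L: "\<And>a b. norm (g a - g b) \<le> L * norm (a - b)" and L0: "0 \<le> L"
  shows "norm D \<le> L"
proof (rule norm_blinfun_bound[OF L0])
  fix h
  show "norm (D h) \<le> L * norm h"
  proof (cases "h = 0")
    case False
    hence hp: "norm h > 0" by simp
    show ?thesis
    proof (rule field_le_epsilon)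
      fix e :: real assume e: "0 < e"
      obtain d where d0: "d > 0"
        and dd: "\<And>y. norm (y - x) < d \<Longrightarrow> norm (g y - g x - D (y - x)) \<le> (e / norm h) * norm (y - x)"
        using d e hp unfolding has_derivative_within_alt by (meson divide_pos_pos UNIV_I)
      define t where "t = d / (2 * norm h)"
      have t0: "t > 0" using d0 hp by (simp add: t_def)
      have "norm ((x + t *\<^sub>R h) - x) < d" using d0 hp by (simp add: t_def)
      from dd[OF this] have 1: "norm (g (x + t *\<^sub>R h) - g x - t *\<^sub>R D h) \<le> e * t"
        using t0 hp by (simp add: blinfun.scaleR_right)
      have 2: "norm (g (x + t *\<^sub>R h) - g x) \<le> L * (t * norm h)"
        using L[of "x + t *\<^sub>R h" x] t0 by simp
      have "norm (t *\<^sub>R D h) \<le> norm (g (x + t *\<^sub>R h) - g x) + norm (g (x + t *\<^sub>R h) - g x - t *\<^sub>R D h)"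
        by (metis norm_minus_commute norm_triangle_sub)
      also have "\<dots> \<le> t * (L * norm h + e)" using 1 2 by (simp add: algebra_simps)
      finally show "norm (D h) \<le> L * norm h + e" using t0 by simp
    qed
  qed simp
qed

lemma binv_eq:
  fixes T S :: "'a::real_normed_vector \<Rightarrow>\<^sub>L 'a"
  assumes TS: "T o\<^sub>L S = id_blinfun" and ST: "S o\<^sub>L T = id_blinfun"
  shows "binv T = S"
proof -
  have "binv T o\<^sub>L T = id_blinfun"
    unfolding binv_def by (rule someI2[of _ S]) (use assms in auto)
  then have "binv T = (binv T o\<^sub>L T) o\<^sub>L S"
    using TS by (intro blinfun_eqI) (metis blinfun_apply_blinfun_compose blinfun_apply_id_blinfun id_apply)
  also have "\<dots> = S"
    using \<open>binv T o\<^sub>L T = id_blinfun\<close> by (intro blinfun_eqI) simp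
  finally show ?thesis .
qed

lemma bij_linear_plus_lipschitz:
  fixes T B :: "'a::banach \<Rightarrow>\<^sub>L 'a" and g :: "'a \<Rightarrow> 'a"
  assumes TB: "T o\<^sub>L B = id_blinfun" and BT: "B o\<^sub>L T = id_blinfun"
    and g: "\<And>x y. norm (g x - g y) \<le> L * norm (x - y)"
    and L: "0 \<le> L" "norm B * L < 1"
  shows "bij (\<lambda>x. T x + g x)"
    and "norm (inv (\<lambda>x. T x + g x) y - inv (\<lambda>x. T x + g x) z)
           \<le> norm B / (1 - norm B * L) * norm (y - z)"
proof -
  let ?F = "\<lambda>x. T x + g x"
  have TBx: "T (B y) = y" and BTx: "B (T x) = x" for x y
    using TB BT by (metis blinfun_apply_blinfun_compose blinfun_apply_id_blinfun id_apply)+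
  have fixpoint: "?F x = y \<longleftrightarrow> B (y - g x) = x" for x y
  proof
    assume "?F x = y"
    then show "B (y - g x) = x" using BTx by auto
  next
    assume "B (y - g x) = x"
    then have "T x = y - g x" using TBx by metis
    then show "?F x = y" by simp
  qed
  have contraction: "norm (B (y - g x) - B (y' - g x')) \<le> norm B * (norm (y - y') + L * norm (x - x'))"
    for x x' y y'
  proof -
    have "B (y - g x) - B (y' - g x') = B ((y - y') - (g x - g x'))"
      by (simp add: blinfun.diff_right[symmetric] algebra_simps)
    also have "norm \<dots> \<le> norm B * norm ((y - y') - (g x - g x'))"
      by (rule norm_blinfun)
    also have "\<dots> \<le> norm B * (norm (y - y') + L * norm (x - x'))"
      by (intro mult_left_mono order_trans[OF norm_triangle_ineq4] add_left_mono g) simp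
    finally show ?thesis .
  qed
  have "\<exists>!x. ?F x = y" for y
  proof -
    have "\<exists>!x. B (y - g x) = x"
    proof (rule banach_fix_type[of "norm B * L"])
      show "\<forall>x x'. dist (B (y - g x)) (B (y - g x')) \<le> norm B * L * dist x x'"
        using contraction[of y _ y] by (simp add: dist_norm mult.assoc)
    qed (use L in auto)
    then show ?thesis using fixpoint by simp
  qed
  then show bij: "bij ?F" by (simp add: bij_iff)
  let ?x = "inv ?F y" and ?z = "inv ?F z"
  have "?F ?x = y" "?F ?z = z"
    using bij_is_surj[OF bij] by (metis surj_f_inv_f)+
  then have "B (y - g ?x) = ?x" "B (z - g ?z) = ?z"
    using fixpoint by blast+
  then have "norm (?x - ?z) \<le> norm B * (norm (y - z) + L * norm (?x - ?z))"
    using contraction[of y ?x z ?z] by simp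
  then have "(1 - norm B * L) * norm (?x - ?z) \<le> norm B * norm (y - z)"
    by (simp add: algebra_simps)
  then show "norm (?x - ?z) \<le> norm B / (1 - norm B * L) * norm (y - z)"
    using L by (simp add: field_simps)
qed

lemma binv_perturbation:
  fixes T B E :: "'a::banach \<Rightarrow>\<^sub>L 'a"
  assumes TB: "T o\<^sub>L B = id_blinfun" and BT: "B o\<^sub>L T = id_blinfun"
    and small: "norm B * norm E < 1"
  shows "(T + E) o\<^sub>L binv (T + E) = id_blinfun" "binv (T + E) o\<^sub>L (T + E) = id_blinfun"
    and "norm (binv (T + E)) \<le> norm B / (1 - norm B * norm E)"
proof -
  let ?F = "\<lambda>x. T x + E x" and ?K = "norm B / (1 - norm B * norm E)"
  have E_lip: "norm (E x - E y) \<le> norm E * norm (x - y)" for x y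
    by (metis blinfun.diff_right norm_blinfun)
  note bij = bij_linear_plus_lipschitz[OF TB BT E_lip norm_ge_zero small]
  define S where "S = inv ?F"
  have FS: "?F (S y) = y" and SF: "S (?F x) = x" for x y
    unfolding S_def
    using surj_f_inv_f[OF bij_is_surj[OF bij(1)], of y] inv_f_f[OF bij_is_inj[OF bij(1)], of x]
    by simp_all
  have "linear S"
  proof
    fix x y :: 'a and r :: real
    have "?F (S x + S y) = ?F (S x) + ?F (S y)" "?F (r *\<^sub>R S x) = r *\<^sub>R ?F (S x)"
      by (simp_all add: blinfun.add_right blinfun.scaleR_right algebra_simps)
    then show "S (x + y) = S x + S y" "S (r *\<^sub>R x) = r *\<^sub>R S x"
      by (metis FS SF)+
  qed
  moreover have S_le: "norm (S y) \<le> ?K * norm y" for y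
    using bij(2)[of y 0] \<open>linear S\<close> by (simp add: S_def linear_0)
  ultimately have "bounded_linear S"
    by (intro bounded_linear_intro[where K="?K"]) (auto simp: linear_add linear_scale mult.commute)
  then have apply_S: "blinfun_apply (Blinfun S) = S"
    by (rule bounded_linear_Blinfun_apply)
  have "(T + E) o\<^sub>L Blinfun S = id_blinfun" "Blinfun S o\<^sub>L (T + E) = id_blinfun"
    by (auto intro!: blinfun_eqI simp: apply_S FS SF blinfun.add_left)
  moreover from this have "binv (T + E) = Blinfun S" by (rule binv_eq)
  ultimately show "(T + E) o\<^sub>L binv (T + E) = id_blinfun" "binv (T + E) o\<^sub>L (T + E) = id_blinfun"
    by simp_all
  have "0 \<le> ?K" using small by simp
  then show "norm (binv (T + E)) \<le> ?K"
    unfolding \<open>binv (T + E) = Blinfun S\<close> by (rule norm_blinfun_bound) (use apply_S S_le in simp)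
qed

lemma lipschitz_on_binv:
  fixes R :: "('a::real_normed_vector \<Rightarrow>\<^sub>L 'a) set"
  assumes inv: "\<And>T. T \<in> R \<Longrightarrow> T o\<^sub>L binv T = id_blinfun \<and> binv T o\<^sub>L T = id_blinfun"
    and K: "\<And>T. T \<in> R \<Longrightarrow> norm (binv T) \<le> K"
  shows "(K * K)-lipschitz_on R binv"
proof (rule lipschitz_onI)
  fix T U assume T: "T \<in> R" and U: "U \<in> R"
  have "U (binv U y) = y" "binv T (T y) = y" for y
    using inv[OF T] inv[OF U] by (metis blinfun_apply_blinfun_compose blinfun_apply_id_blinfun id_apply)+
  then have "binv T - binv U = binv T o\<^sub>L (U - T) o\<^sub>L binv U"
    by (intro blinfun_eqI) (simp add: blinfun.diff_left blinfun.diff_right)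
  also have "norm \<dots> \<le> norm (binv T) * norm (U - T) * norm (binv U)"
    by (intro order_trans[OF norm_blinfun_compose] mult_right_mono norm_blinfun_compose) simp
  also have "\<dots> \<le> K * norm (U - T) * K"
    using K[OF T] K[OF U] order_trans[OF norm_ge_zero K[OF T]] by (intro mult_mono) auto
  finally show "dist (binv T) (binv U) \<le> K * K * dist T U"
    by (simp add: dist_norm norm_minus_commute mult_ac)
qed simp

lemma continuous_on_binv:
  fixes M :: "'a::topological_space \<Rightarrow> ('b::real_normed_vector \<Rightarrow>\<^sub>L 'b)"
  assumes "continuous_on S M"
    and "\<And>x. x \<in> S \<Longrightarrow> M x o\<^sub>L binv (M x) = id_blinfun \<and> binv (M x) o\<^sub>L M x = id_blinfun"
    and "\<And>x. x \<in> S \<Longrightarrow> norm (binv (M x)) \<le> K"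
  shows "continuous_on S (\<lambda>x. binv (M x))"
  using lipschitz_on_continuous_on[OF lipschitz_on_binv[of "M ` S"]] assms
  by (intro continuous_on_compose2[where f=M and g=binv]) auto

definition C1_deriv_bounded :: "('a::real_normed_vector \<Rightarrow> 'b::real_normed_vector) \<Rightarrow> real \<Rightarrow> bool" where
  "C1_deriv_bounded g c \<longleftrightarrow> (\<exists>D :: 'a \<Rightarrow> ('a \<Rightarrow>\<^sub>L 'b).
      (\<forall>x. (g has_derivative blinfun_apply (D x)) (at x)) \<and> continuous_on UNIV D \<and> (\<forall>x. norm (D x) \<le> c))"

lemma C1_deriv_boundedI:
  assumes "\<And>x. (g has_derivative blinfun_apply (D x)) (at x)" "continuous_on UNIV D"
    and "\<And>x. norm (D x) \<le> c"
  shows "C1_deriv_bounded g c"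
  using assms unfolding C1_deriv_bounded_def by blast

lemma C1_deriv_boundedE:
  assumes "C1_deriv_bounded g c"
  obtains D where "\<And>x. (g has_derivative blinfun_apply (D x)) (at x)" "continuous_on UNIV D"
    "\<And>x. norm (D x) \<le> c"
  using assms unfolding C1_deriv_bounded_def by blast

lemma C1_deriv_bounded_imp_C1: "C1_deriv_bounded g c \<Longrightarrow> C1 g"
  unfolding C1_deriv_bounded_def C1_def by blast

lemma C1_deriv_bounded_ident: "C1_deriv_bounded (\<lambda>x. x) 1"
  by (rule C1_deriv_boundedI[where D="\<lambda>_. id_blinfun"])
    (simp_all add: id_blinfun.rep_eq has_derivative_ident norm_blinfun_id_le)

lemma C1_deriv_bounded_blinfun: "C1_deriv_bounded (blinfun_apply L) (norm L)"
  by (rule C1_deriv_boundedI[where D="\<lambda>_. L"])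
    (simp_all add: bounded_linear_imp_has_derivative blinfun.bounded_linear_right)

lemma C1_deriv_bounded_compose:
  assumes "C1_deriv_bounded g a" "C1_deriv_bounded h b"
  shows "C1_deriv_bounded (\<lambda>x. h (g x)) (b * a)"
proof -
  obtain Dg where Dg: "\<And>x. (g has_derivative blinfun_apply (Dg x)) (at x)" "continuous_on UNIV Dg"
    "\<And>x. norm (Dg x) \<le> a" using assms(1) by (rule C1_deriv_boundedE) blast
  obtain Dh where Dh: "\<And>x. (h has_derivative blinfun_apply (Dh x)) (at x)" "continuous_on UNIV Dh"
    "\<And>x. norm (Dh x) \<le> b" using assms(2) by (rule C1_deriv_boundedE) blast
  have g_cont: "continuous_on UNIV g"
    using Dg(1) has_derivative_continuous continuous_at_imp_continuous_on by blast
  show ?thesis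
  proof (rule C1_deriv_boundedI[where D="\<lambda>x. Dh (g x) o\<^sub>L Dg x"])
    show "((\<lambda>x. h (g x)) has_derivative blinfun_apply (Dh (g x) o\<^sub>L Dg x)) (at x)" for x
      using has_derivative_compose[OF Dg(1) Dh(1)] by (simp add: o_def blinfun_apply_blinfun_compose[abs_def])
    show "continuous_on UNIV (\<lambda>x. Dh (g x) o\<^sub>L Dg x)"
      by (rule bounded_bilinear.continuous_on[OF bounded_bilinear_blinfun_compose
          continuous_on_compose2[OF Dh(2) g_cont] Dg(2)]) auto
    show "norm (Dh (g x) o\<^sub>L Dg x) \<le> b * a" for x
      by (rule order_trans[OF norm_blinfun_compose mult_mono])
        (use Dg(3) Dh(3) order_trans[OF norm_ge_zero Dh(3)] in auto)
  qed
qed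

lemma C1_deriv_bounded_lipschitz:
  assumes "C1_deriv_bounded g c"
  shows "norm (g x - g y) \<le> c * norm (x - y)"
proof -
  obtain D where D: "\<And>x. (g has_derivative blinfun_apply (D x)) (at x)" "\<And>x. norm (D x) \<le> c"
    using assms by (rule C1_deriv_boundedE) blast
  show ?thesis
    by (rule differentiable_bound[where S=UNIV and f'="\<lambda>x. blinfun_apply (D x)"])
      (use D in \<open>auto simp: norm_blinfun.rep_eq[symmetric]\<close>)
qed

lemma C1_deriv_bounded_linear_plus:
  fixes T :: "'a::real_normed_vector \<Rightarrow>\<^sub>L 'b::real_normed_vector"
  assumes "C1 g" and g_lip: "\<And>x y. norm (g x - g y) \<le> L * norm (x - y)" and "0 \<le> L"
  shows "C1_deriv_bounded (\<lambda>x. T x + g x) (norm T + L)"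
proof -
  obtain Dg where Dg: "\<And>x. (g has_derivative blinfun_apply (Dg x)) (at x)" "continuous_on UNIV Dg"
    using \<open>C1 g\<close> unfolding C1_def by blast
  show ?thesis
  proof (rule C1_deriv_boundedI[where D="\<lambda>x. T + Dg x"])
    show "((\<lambda>x. T x + g x) has_derivative blinfun_apply (T + Dg x)) (at x)" for x
      using has_derivative_add[OF bounded_linear_imp_has_derivative[OF blinfun.bounded_linear_right] Dg(1)]
      by (simp add: blinfun.add_left[abs_def])
    show "continuous_on UNIV (\<lambda>x. T + Dg x)"
      by (intro continuous_intros Dg(2))
    show "norm (T + Dg x) \<le> norm T + L" for x
      using norm_triangle_ineq[of T "Dg x"] norm_derivative_le_lipschitz[OF Dg(1)[of x] g_lip \<open>0 \<le> L\<close>]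
      by linarith
  qed
qed

lemma C1_deriv_bounded_inv_linear_plus:
  fixes T B :: "'a::banach \<Rightarrow>\<^sub>L 'a"
  assumes TB: "T o\<^sub>L B = id_blinfun" and BT: "B o\<^sub>L T = id_blinfun"
    and "C1 g" and g_lip: "\<And>x y. norm (g x - g y) \<le> L * norm (x - y)"
    and L: "0 \<le> L" "norm B * L < 1"
  shows "C1_deriv_bounded (inv (\<lambda>x. T x + g x)) (norm B / (1 - norm B * L))"
proof -
  let ?F = "\<lambda>x. T x + g x" and ?K = "norm B / (1 - norm B * L)"
  obtain Dg where Dg: "\<And>x. (g has_derivative blinfun_apply (Dg x)) (at x)" "continuous_on UNIV Dg"
    using \<open>C1 g\<close> unfolding C1_def by blast
  have Dg_le: "norm B * norm (Dg x) \<le> norm B * L" for x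
    by (intro mult_left_mono norm_derivative_le_lipschitz[OF Dg(1) g_lip L(1)]) simp
  note inv_DF = binv_perturbation[OF TB BT le_less_trans[OF Dg_le L(2)]]
  have inv_DF_le: "norm (binv (T + Dg x)) \<le> ?K" for x
  proof (rule order_trans[OF inv_DF(3)])
    show "norm B / (1 - norm B * norm (Dg x)) \<le> ?K"
      using Dg_le[of x] L(2) by (intro divide_left_mono mult_pos_pos) auto
  qed
  note bij = bij_linear_plus_lipschitz[OF TB BT g_lip L]
  have F_inv: "?F (inv ?F y) = y" for y
    using surj_f_inv_f[OF bij_is_surj[OF bij(1)], of y] by simp
  have "?K-lipschitz_on UNIV (inv ?F)"
    using bij(2) L by (intro lipschitz_onI) (auto simp: dist_norm)
  then have inv_cont: "continuous_on UNIV (inv ?F)"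
    by (rule lipschitz_on_continuous_on)
  have dF: "(?F has_derivative blinfun_apply (T + Dg x)) (at x)" for x
    using has_derivative_add[OF bounded_linear_imp_has_derivative[OF blinfun.bounded_linear_right] Dg(1)]
    by (simp add: blinfun.add_left[abs_def])
  show ?thesis
  proof (rule C1_deriv_boundedI[where D="\<lambda>y. binv (T + Dg (inv ?F y))"])
    show "(inv ?F has_derivative blinfun_apply (binv (T + Dg (inv ?F y)))) (at y)" for y
    proof (rule has_derivative_inverse_basic[OF dF blinfun.bounded_linear_right, where T=UNIV])
      have "binv (T + Dg x) ((T + Dg x) h) = h" for x h
        using inv_DF(2) by (metis blinfun_apply_blinfun_compose blinfun_apply_id_blinfun id_apply)
      then show "blinfun_apply (binv (T + Dg (inv ?F y))) \<circ> blinfun_apply (T + Dg (inv ?F y)) = id"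
        by (simp add: fun_eq_iff)
      show "continuous (at y) (inv ?F)"
        using inv_cont continuous_on_eq_continuous_at by blast
    qed (use F_inv in auto)
    show "continuous_on UNIV (\<lambda>y. binv (T + Dg (inv ?F y)))"
      using inv_DF(1,2) inv_DF_le
      by (intro continuous_on_binv continuous_intros continuous_on_compose2[OF Dg(2) inv_cont]) auto
  qed (rule inv_DF_le)
qed

lemma C1_deriv_bounded_nonneg: "C1_deriv_bounded g c \<Longrightarrow> 0 \<le> c"
  unfolding C1_deriv_bounded_def using norm_ge_zero order_trans by blast

lemma C1_deriv_bounded_lipschitz_C1:
  assumes "C1 g" and g_lip: "\<And>x y. norm (g x - g y) \<le> L * norm (x - y)" and "0 \<le> L"
  shows "C1_deriv_bounded g L"
  using assms norm_derivative_le_lipschitz[OF _ g_lip \<open>0 \<le> L\<close>]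
  unfolding C1_def C1_deriv_bounded_def by blast

lemma C1_id_plus_contraction:
  fixes h :: "'a::banach \<Rightarrow> 'a"
  assumes h: "C1_deriv_bounded h q" and "q < 1"
  shows "C1 (\<lambda>x. x + h x)" and "C1 (inv (\<lambda>x. x + h x))"
proof -
  have id_id: "id_blinfun o\<^sub>L id_blinfun = (id_blinfun :: 'a \<Rightarrow>\<^sub>L 'a)"
    by (rule blinfun_eqI) simp
  have q: "0 \<le> q" by (rule C1_deriv_bounded_nonneg[OF h])
  have "norm (id_blinfun :: 'a \<Rightarrow>\<^sub>L 'a) \<le> 1"
    by (rule norm_blinfun_id_le)
  then have q_id: "norm (id_blinfun :: 'a \<Rightarrow>\<^sub>L 'a) * q < 1"
    using mult_left_le_one_le[OF q norm_ge_zero] \<open>q < 1\<close> by fastforce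
  note h_C1 = C1_deriv_bounded_imp_C1[OF h] and h_lip = C1_deriv_bounded_lipschitz[OF h]
  show "C1 (\<lambda>x. x + h x)"
    using C1_deriv_bounded_imp_C1[OF C1_deriv_bounded_linear_plus[OF h_C1 h_lip q, of id_blinfun]]
    by simp
  show "C1 (inv (\<lambda>x. x + h x))"
    using C1_deriv_bounded_imp_C1[OF C1_deriv_bounded_inv_linear_plus[OF id_id id_id h_C1 h_lip q q_id]]
    by simp
qed

lemma norm_infsum_minus_sum_le:
  fixes v :: "'i \<Rightarrow> 'b::banach"
  assumes vb: "\<And>k. norm (v k) \<le> b k" and sb: "b summable_on UNIV" and "finite F"
  shows "norm ((\<Sum>\<^sub>\<infinity>k. v k) - sum v F) \<le> (\<Sum>\<^sub>\<infinity>k. b k) - sum b F"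
proof -
  have sbC: "b summable_on (-F)"
    by (rule summable_on_subset_banach[OF sb]) auto
  have nvC: "(\<lambda>k. norm (v k)) summable_on (-F)"
    by (rule summable_on_comparison_test[OF sbC]) (use vb in auto)
  have svC: "v summable_on (-F)"
    by (rule abs_summable_summable[OF nvC])
  have split: "infsum g UNIV = sum g F + infsum g (-F)" if "g summable_on (-F)" for g :: "'i \<Rightarrow> 'c::banach"
    using infsum_Un_disjoint[OF summable_on_finite[OF \<open>finite F\<close>] that]
    by (simp add: infsum_finite[OF \<open>finite F\<close>] Un_Diff_cancel2 Compl_eq_Diff_UNIV)
  have "norm ((\<Sum>\<^sub>\<infinity>k. v k) - sum v F) = norm (\<Sum>\<^sub>\<infinity>k\<in>-F. v k)"
    using split[OF svC] by simp
  also have "\<dots> \<le> (\<Sum>\<^sub>\<infinity>k\<in>-F. norm (v k))"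
    by (rule norm_infsum_bound[OF nvC])
  also have "\<dots> \<le> (\<Sum>\<^sub>\<infinity>k\<in>-F. b k)"
    by (rule infsum_mono[OF nvC sbC]) (use vb in auto)
  finally show ?thesis
    using split[OF sbC] by simp
qed

lemma filterlim_symmetric_intervals:
  "filterlim (\<lambda>N::nat. {-int N..int N}) (finite_subsets_at_top UNIV) sequentially"
  unfolding filterlim_finite_subsets_at_top
proof (intro allI impI)
  fix X :: "int set" assume "finite X \<and> X \<subseteq> UNIV"
  then have X: "x \<in> X \<Longrightarrow> \<bar>x\<bar> \<le> sum abs X" for x
    by (intro member_le_sum) auto
  show "\<forall>\<^sub>F N in sequentially. finite {-int N..int N} \<and> X \<subseteq> {-int N..int N} \<and> {-int N..int N} \<subseteq> UNIV"
    unfolding eventually_sequentially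
    by (rule exI[of _ "nat (sum abs X)"]) (force dest: X)
qed

lemma uniform_limit_symmetric_partial_sums:
  fixes v :: "int \<Rightarrow> 'x \<Rightarrow> 'b::banach"
  assumes vb: "\<And>k x. norm (v k x) \<le> b k" and sb: "b summable_on UNIV"
  shows "uniform_limit UNIV (\<lambda>N x. \<Sum>k\<in>{-int N..int N}. v k x) (\<lambda>x. \<Sum>\<^sub>\<infinity>k. v k x) sequentially"
proof (rule uniform_limitI)
  fix e :: real assume "e > 0"
  have "((\<lambda>N. sum b {-int N..int N}) \<longlongrightarrow> (\<Sum>\<^sub>\<infinity>k. b k)) sequentially"
    using sb unfolding summable_iff_has_sum_infsum has_sum_def
    by (rule filterlim_compose[OF _ filterlim_symmetric_intervals])
  from tendsto_diff[OF tendsto_const[of "\<Sum>\<^sub>\<infinity>k. b k"] this]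
  have "((\<lambda>N. (\<Sum>\<^sub>\<infinity>k. b k) - sum b {-int N..int N}) \<longlongrightarrow> 0) sequentially"
    by simp
  from order_tendstoD(2)[OF this \<open>e > 0\<close>]
  show "\<forall>\<^sub>F N in sequentially. \<forall>x\<in>UNIV. dist (\<Sum>k\<in>{-int N..int N}. v k x) (\<Sum>\<^sub>\<infinity>k. v k x) < e"
  proof eventually_elim
    case (elim N)
    show ?case
    proof
      fix x
      show "dist (\<Sum>k\<in>{-int N..int N}. v k x) (\<Sum>\<^sub>\<infinity>k. v k x) < e"
        using norm_infsum_minus_sum_le[of "\<lambda>k. v k x", OF vb sb, of "{-int N..int N}"] elim
        by (simp add: dist_norm norm_minus_commute[of "sum _ _"])
    qed
  qed
qed

lemma has_derivative_infsum_int: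
  fixes u :: "int \<Rightarrow> 'a::real_normed_vector \<Rightarrow> 'b::banach"
  assumes dU: "\<And>k x. (u k has_derivative blinfun_apply (U k x)) (at x)"
    and bU: "\<And>k x. norm (U k x) \<le> b k" and sb: "b summable_on UNIV"
    and uc: "\<And>k x. norm (u k x) \<le> c k" and sc: "c summable_on UNIV"
  shows "((\<lambda>x. \<Sum>\<^sub>\<infinity>k. u k x) has_derivative blinfun_apply (\<Sum>\<^sub>\<infinity>k. U k x)) (at x)"
proof -
  define I where "I N = {-int N..int N}" for N :: nat
  have ul_U: "uniform_limit UNIV (\<lambda>N x. \<Sum>k\<in>I N. U k x) (\<lambda>x. \<Sum>\<^sub>\<infinity>k. U k x) sequentially"
    unfolding I_def by (rule uniform_limit_symmetric_partial_sums[OF bU sb])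
  have lim_u: "(\<lambda>N. \<Sum>k\<in>I N. u k x) \<longlonglongrightarrow> (\<Sum>\<^sub>\<infinity>k. u k x)" for x
    using tendsto_uniform_limitI[OF uniform_limit_symmetric_partial_sums[OF uc sc]]
    by (simp add: I_def)
  have "\<exists>g. \<forall>x\<in>UNIV. (\<lambda>N. \<Sum>k\<in>I N. u k x) \<longlonglongrightarrow> g x \<and>
          (g has_derivative blinfun_apply (\<Sum>\<^sub>\<infinity>k. U k x)) (at x within UNIV)"
  proof (rule has_derivative_sequence[where f'="\<lambda>N x. blinfun_apply (\<Sum>k\<in>I N. U k x)"])
    show "((\<lambda>x. \<Sum>k\<in>I N. u k x) has_derivative blinfun_apply (\<Sum>k\<in>I N. U k x)) (at x within UNIV)"
      for N x
      using has_derivative_sum[OF dU] by (simp add: blinfun.sum_left[abs_def])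
    show "\<forall>\<^sub>F N in sequentially. \<forall>x\<in>UNIV. \<forall>h. norm (blinfun_apply (\<Sum>k\<in>I N. U k x) h
            - blinfun_apply (\<Sum>\<^sub>\<infinity>k. U k x) h) \<le> e * norm h" if "e > 0" for e
      using uniform_limitD[OF ul_U that]
    proof eventually_elim
      case (elim N)
      show ?case
      proof (intro ballI allI)
        fix x h
        have "norm (blinfun_apply (\<Sum>k\<in>I N. U k x) h - blinfun_apply (\<Sum>\<^sub>\<infinity>k. U k x) h)
            \<le> norm ((\<Sum>k\<in>I N. U k x) - (\<Sum>\<^sub>\<infinity>k. U k x)) * norm h"
          by (metis blinfun.diff_left norm_blinfun)
        also have "\<dots> \<le> e * norm h"
          using elim by (intro mult_right_mono) (auto simp: dist_norm less_imp_le)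
        finally show "norm (blinfun_apply (\<Sum>k\<in>I N. U k x) h - blinfun_apply (\<Sum>\<^sub>\<infinity>k. U k x) h)
            \<le> e * norm h" .
      qed
    qed
  qed (use lim_u in auto)
  then obtain g where "\<And>x. (\<lambda>N. \<Sum>k\<in>I N. u k x) \<longlonglongrightarrow> g x"
    and "(g has_derivative blinfun_apply (\<Sum>\<^sub>\<infinity>k. U k x)) (at x)" by auto
  moreover from this(1) have "g = (\<lambda>x. \<Sum>\<^sub>\<infinity>k. u k x)"
    using lim_u LIMSEQ_unique by blast
  ultimately show ?thesis by simp
qed

lemma C1_deriv_bounded_infsum:
  fixes u :: "int \<Rightarrow> 'a::real_normed_vector \<Rightarrow> 'b::banach"
  assumes u: "\<And>k. C1_deriv_bounded (u k) (b k)" and sb: "b summable_on UNIV"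
    and uc: "\<And>k x. norm (u k x) \<le> c k" and sc: "c summable_on UNIV"
  shows "C1_deriv_bounded (\<lambda>x. \<Sum>\<^sub>\<infinity>k. u k x) (\<Sum>\<^sub>\<infinity>k. b k)"
proof -
  obtain U where dU: "\<And>k x. (u k has_derivative blinfun_apply (U k x)) (at x)"
    and cU: "\<And>k. continuous_on UNIV (U k)" and bU: "\<And>k x. norm (U k x) \<le> b k"
    using u unfolding C1_deriv_bounded_def by metis
  show ?thesis
  proof (rule C1_deriv_boundedI[where D="\<lambda>x. \<Sum>\<^sub>\<infinity>k. U k x"])
    show "((\<lambda>x. \<Sum>\<^sub>\<infinity>k. u k x) has_derivative blinfun_apply (\<Sum>\<^sub>\<infinity>k. U k x)) (at x)" for x
      by (rule has_derivative_infsum_int[OF dU bU sb uc sc])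
    show "continuous_on UNIV (\<lambda>x. \<Sum>\<^sub>\<infinity>k. U k x)"
      by (rule uniform_limit_theorem[OF _ uniform_limit_symmetric_partial_sums[OF bU sb]])
        (auto intro!: always_eventually continuous_on_sum cU)
    show "norm (\<Sum>\<^sub>\<infinity>k. U k x) \<le> (\<Sum>\<^sub>\<infinity>k. b k)" for x
      using norm_infsum_minus_sum_le[of "\<lambda>k. U k x", OF bU sb finite.emptyI] by simp
  qed
qed

lemma summable_on_int_shift:
  fixes g :: "int \<Rightarrow> 'b::{topological_comm_monoid_add}"
  assumes "g summable_on UNIV"
  shows "(\<lambda>k. g (k + c)) summable_on UNIV"
proof -
  have "bij_betw (\<lambda>k. k + c) UNIV UNIV"
    by (rule bij_betwI[where g="\<lambda>k. k - c"]) auto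
  then show ?thesis by (subst summable_on_reindex_bij_betw) (use assms in auto)
qed

lemma infsum_int_split:
  fixes b :: "int \<Rightarrow> real"
  assumes lower: "b summable_on {..<n}" and upper: "b summable_on {n<..}"
  shows "b summable_on UNIV" and "infsum b UNIV = infsum b {..<n} + b n + infsum b {n<..}"
proof -
  have upper': "b summable_on insert n {n<..}"
    using upper by (simp add: summable_on_insert_iff)
  have UNIV_split: "UNIV = {..<n} \<union> insert n {n<..}" by auto
  show "b summable_on UNIV"
    by (subst UNIV_split, rule summable_on_Un_disjoint[OF lower upper']) auto
  have "infsum b UNIV = infsum b {..<n} + infsum b (insert n {n<..})"
    by (subst UNIV_split, rule infsum_Un_disjoint[OF lower upper']) auto
  also have "infsum b (insert n {n<..}) = b n + infsum b {n<..}"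
    by (rule infsum_insert[OF upper]) simp
  finally show "infsum b UNIV = infsum b {..<n} + b n + infsum b {n<..}"
    by (simp add: add.assoc)
qed

fun orbit_fwd :: "(int \<Rightarrow> 'a \<Rightarrow> 'a) \<Rightarrow> int \<Rightarrow> 'a \<Rightarrow> nat \<Rightarrow> 'a" where
  "orbit_fwd F n \<xi> 0 = \<xi>"
| "orbit_fwd F n \<xi> (Suc m) = F (n + int m) (orbit_fwd F n \<xi> m)"

fun orbit_bwd :: "(int \<Rightarrow> 'a \<Rightarrow> 'a) \<Rightarrow> int \<Rightarrow> 'a \<Rightarrow> nat \<Rightarrow> 'a" where
  "orbit_bwd F n \<xi> 0 = \<xi>"
| "orbit_bwd F n \<xi> (Suc m) = inv (F (n - int m - 1)) (orbit_bwd F n \<xi> m)"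

definition orbit :: "(int \<Rightarrow> 'a \<Rightarrow> 'a) \<Rightarrow> int \<Rightarrow> 'a \<Rightarrow> int \<Rightarrow> 'a" where
  "orbit F n \<xi> k = (if n \<le> k then orbit_fwd F n \<xi> (nat (k - n)) else orbit_bwd F n \<xi> (nat (n - k)))"

lemma orbit_start [simp]: "orbit F n \<xi> n = \<xi>"
  by (simp add: orbit_def)

lemma orbit_succ:
  assumes "n \<le> k"
  shows "orbit F n \<xi> (k + 1) = F k (orbit F n \<xi> k)"
proof -
  have "nat (k + 1 - n) = Suc (nat (k - n))" using assms by simp
  then show ?thesis using assms by (simp add: orbit_def)
qed

lemma orbit_pred: "k < n \<Longrightarrow> orbit F n \<xi> k = inv (F k) (orbit F n \<xi> (k + 1))"
proof -
  assume "k < n"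
  then have "nat (n - k) = Suc (nat (n - (k + 1)))" and "n - int (nat (n - (k + 1))) - 1 = k"
    by simp_all
  then show ?thesis
    using \<open>k < n\<close> by (cases "k + 1 = n") (auto simp: orbit_def)
qed

lemma orbit_step:
  assumes "surj (F k)"
  shows "orbit F n \<xi> (k + 1) = F k (orbit F n \<xi> k)"
proof (cases "n \<le> k")
  case False
  then show ?thesis
    using orbit_pred[of k n F \<xi>] surj_f_inv_f[OF assms] by simp
qed (rule orbit_succ)

lemma orbit_unique:
  assumes bij: "\<And>k. bij (F k)" and start: "x n = \<xi>" and step: "\<And>j. x (j + 1) = F j (x j)"
  shows "x k = orbit F n \<xi> k"
proof (induction k rule: int_induct[where k=n])
  case base
  show ?case using start by simp
next
  case (step1 i)
  then show ?case using step[of i] orbit_step[OF bij_is_surj[OF bij]] by simp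
next
  case (step2 i)
  have "F (i - 1) (x (i - 1)) = F (i - 1) (orbit F n \<xi> (i - 1))"
    using step[of "i - 1"] orbit_step[OF bij_is_surj[OF bij], where k="i - 1"] step2 by simp
  then show ?case using bij_is_inj[OF bij] by (simp add: inj_eq)
qed

lemma C1_deriv_bounded_orbit:
  fixes F :: "int \<Rightarrow> 'a::real_normed_vector \<Rightarrow> 'a"
  assumes surj: "\<And>k. surj (F k)"
    and F: "\<And>k. C1_deriv_bounded (F k) (a k)" and F_inv: "\<And>k. C1_deriv_bounded (inv (F k)) (b k)"
  shows "C1_deriv_bounded (\<lambda>\<xi>. orbit F n \<xi> k)
           (if n \<le> k then \<Prod>j\<in>{n..k-1}. a j else \<Prod>j\<in>{k..n-1}. b j)"
proof (induction k rule: int_induct[where k=n])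
  case base
  show ?case using C1_deriv_bounded_ident by simp
next
  case (step1 i)
  have "{n..i} = insert i {n..i - 1}" using step1(1) by auto
  then have "(\<Prod>j\<in>{n..i}. a j) = a i * (\<Prod>j\<in>{n..i-1}. a j)" by simp
  then show ?case
    using C1_deriv_bounded_compose[OF step1(2) F[of i]] step1(1) by (simp add: orbit_succ)
next
  case (step2 i)
  have "(if n \<le> i then \<Prod>j\<in>{n..i-1}. a j else \<Prod>j\<in>{i..n-1}. b j) = (\<Prod>j\<in>{i..n-1}. b j)"
    using step2(1) by auto
  moreover have "{i - 1..n - 1} = insert (i - 1) {i..n - 1}" using step2(1) by auto
  ultimately show ?case
    using C1_deriv_bounded_compose[OF step2(2) F_inv[of "i - 1"]] step2(1) by (simp add: orbit_pred)
qed

(* The bound on the derivative of xi |-> x_2(k,n,xi) that appears in the hypothesis on G. *)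
definition orbit_growth :: "(int \<Rightarrow> ('a::real_normed_vector \<Rightarrow>\<^sub>L 'a)) \<Rightarrow> (int \<Rightarrow> real) \<Rightarrow> int \<Rightarrow> int \<Rightarrow> real" where
  "orbit_growth A \<gamma> n k =
     (if n \<le> k then \<Prod>j\<in>{n..k-1}. norm (A j) + \<gamma> j
      else \<Prod>j\<in>{k..n-1}. norm (binv (A j)) / (1 - \<gamma> j * norm (binv (A j))))"

lemma green_growth_sum_lt_1:
  fixes A P :: "int \<Rightarrow> ('a::real_normed_vector \<Rightarrow>\<^sub>L 'a)" and \<gamma> :: "int \<Rightarrow> real"
  assumes cond: "(\<lambda>k. norm (green A P n (k + 1)) * \<gamma> k *
             (\<Prod>j\<in>{k..n-1}. norm (binv (A j)) / (1 - \<gamma> j * norm (binv (A j))))) summable_on {..<n}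
     \<and> (\<lambda>k. norm (green A P n (k + 1)) * \<gamma> k *
             (\<Prod>j\<in>{n..k-1}. norm (A j) + \<gamma> j)) summable_on {n<..}
     \<and> (\<Sum>\<^sub>\<infinity>k\<in>{..<n}. norm (green A P n (k + 1)) * \<gamma> k *
             (\<Prod>j\<in>{k..n-1}. norm (binv (A j)) / (1 - \<gamma> j * norm (binv (A j)))))
       + (\<Sum>\<^sub>\<infinity>k\<in>{n<..}. norm (green A P n (k + 1)) * \<gamma> k *
             (\<Prod>j\<in>{n..k-1}. norm (A j) + \<gamma> j))
       + norm (green A P n (n + 1)) * \<gamma> n < 1"
  defines "b \<equiv> \<lambda>k. norm (green A P n (k + 1)) * \<gamma> k * orbit_growth A \<gamma> n k"
  shows "b summable_on UNIV" and "infsum b UNIV < 1"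
proof -
  have b_lower: "b k = norm (green A P n (k + 1)) * \<gamma> k *
      (\<Prod>j\<in>{k..n-1}. norm (binv (A j)) / (1 - \<gamma> j * norm (binv (A j))))" if "k \<in> {..<n}" for k
    using that by (simp add: b_def orbit_growth_def)
  have b_upper: "b k = norm (green A P n (k + 1)) * \<gamma> k * (\<Prod>j\<in>{n..k-1}. norm (A j) + \<gamma> j)"
    if "k \<in> {n<..}" for k
    using that by (simp add: b_def orbit_growth_def)
  have lower: "b summable_on {..<n}"
    using cond by (subst summable_on_cong[OF b_lower]) auto
  have upper: "b summable_on {n<..}"
    using cond by (subst summable_on_cong[OF b_upper]) auto
  have "b n = norm (green A P n (n + 1)) * \<gamma> n"
    by (simp add: b_def orbit_growth_def)
  then have "infsum b {..<n} + infsum b {n<..} + b n < 1"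
    using cond by (simp only: infsum_cong[OF b_lower] infsum_cong[OF b_upper])
  then show "b summable_on UNIV" and "infsum b UNIV < 1"
    using infsum_int_split[OF lower upper] by simp_all
qed

locale lipschitz_perturbed_system =
  fixes A :: "int \<Rightarrow> ('a::banach \<Rightarrow>\<^sub>L 'a)" and f :: "int \<Rightarrow> 'a \<Rightarrow> 'a" and \<gamma> :: "int \<Rightarrow> real"
  assumes A_inv: "\<And>n. \<exists>B. A n o\<^sub>L B = id_blinfun \<and> B o\<^sub>L A n = id_blinfun"
    and gamma_nonneg: "\<And>n. \<gamma> n \<ge> 0"
    and f_lip: "\<And>n x1 x2. norm (f n x1 - f n x2) \<le> \<gamma> n * norm (x1 - x2)"
    and inv_gamma: "\<And>n. norm (binv (A n)) * \<gamma> n < 1"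
    and f_C1: "\<And>n. C1 (f n)"
begin

lemma A_binv: "A n o\<^sub>L binv (A n) = id_blinfun" "binv (A n) o\<^sub>L A n = id_blinfun"
  using A_inv[of n] binv_eq by metis+

lemma bij_step: "bij (\<lambda>x. A k x + f k x)"
  by (rule bij_linear_plus_lipschitz(1)[OF A_binv f_lip gamma_nonneg inv_gamma])

lemma x2_eq_orbit: "x2 A f k n \<xi> = orbit (\<lambda>j x. A j x + f j x) n \<xi> k"
proof -
  let ?F = "\<lambda>j x. A j x + f j x"
  have step: "orbit ?F n \<xi> (j + 1) = ?F j (orbit ?F n \<xi> j)" for j
    by (rule orbit_step) (rule bij_is_surj[OF bij_step])
  have "(THE x. x n = \<xi> \<and> (\<forall>j. x (j + 1) = A j (x j) + f j (x j))) = orbit ?F n \<xi>"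
  proof (rule the_equality)
    show "orbit ?F n \<xi> n = \<xi> \<and> (\<forall>j. orbit ?F n \<xi> (j + 1) = A j (orbit ?F n \<xi> j) + f j (orbit ?F n \<xi> j))"
      using step by simp
    show "x = orbit ?F n \<xi>" if "x n = \<xi> \<and> (\<forall>j. x (j + 1) = A j (x j) + f j (x j))" for x
      using orbit_unique[of ?F x n \<xi>] bij_step that by blast
  qed
  then show ?thesis by (simp add: x2_def)
qed

lemma C1_deriv_bounded_x2: "C1_deriv_bounded (\<lambda>\<xi>. x2 A f k n \<xi>) (orbit_growth A \<gamma> n k)"
proof -
  have "C1_deriv_bounded (inv (\<lambda>x. A j x + f j x)) (norm (binv (A j)) / (1 - \<gamma> j * norm (binv (A j))))" for j
    using C1_deriv_bounded_inv_linear_plus[OF A_binv f_C1 f_lip gamma_nonneg inv_gamma]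
    by (simp add: mult.commute)
  then show ?thesis
    unfolding x2_eq_orbit orbit_growth_def
    by (intro C1_deriv_bounded_orbit bij_is_surj[OF bij_step]
        C1_deriv_bounded_linear_plus[OF f_C1 f_lip gamma_nonneg])
qed

lemma C1_deriv_bounded_hbar:
  fixes P :: "int \<Rightarrow> ('a \<Rightarrow>\<^sub>L 'a)" and \<mu> :: "int \<Rightarrow> real"
  assumes f_bdd: "\<And>k x. norm (f k x) \<le> \<mu> k"
    and sum_mu: "(\<lambda>k. norm (green A P n (k + 1)) * \<mu> k) summable_on UNIV"
    and sum_growth: "(\<lambda>k. norm (green A P n (k + 1)) * \<gamma> k * orbit_growth A \<gamma> n k) summable_on UNIV"
  shows "C1_deriv_bounded (hbar A P f n)
           (\<Sum>\<^sub>\<infinity>k. norm (green A P n (k + 1)) * \<gamma> k * orbit_growth A \<gamma> n k)"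
proof -
  let ?G = "\<lambda>k. - green A P n (k + 1)"
  have hbar_eq: "hbar A P f n = (\<lambda>\<xi>. \<Sum>\<^sub>\<infinity>k. ?G k (f k (x2 A f k n \<xi>)))"
    by (simp add: fun_eq_iff hbar_def blinfun.minus_left infsum_uminus)
  have summand: "C1_deriv_bounded (\<lambda>\<xi>. ?G k (f k (x2 A f k n \<xi>)))
                (norm (green A P n (k + 1)) * \<gamma> k * orbit_growth A \<gamma> n k)" for k
    using C1_deriv_bounded_compose[OF C1_deriv_bounded_compose[OF C1_deriv_bounded_x2[of k n]
          C1_deriv_bounded_lipschitz_C1[OF f_C1 f_lip gamma_nonneg]] C1_deriv_bounded_blinfun[of "?G k"]]
    by (simp add: mult.assoc)
  have summand_bound: "norm (?G k (f k (x2 A f k n \<xi>))) \<le> norm (green A P n (k + 1)) * \<mu> k" for k \<xi>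
    by (rule order_trans[OF norm_blinfun]) (simp add: mult_left_mono f_bdd)
  show ?thesis
    unfolding hbar_eq by (rule C1_deriv_bounded_infsum[OF summand sum_growth summand_bound sum_mu])
qed

end

theorem mainTheorem4:
  fixes A P :: "int \<Rightarrow> ('a::banach \<Rightarrow>\<^sub>L 'a)"
    and f :: "int \<Rightarrow> 'a \<Rightarrow> 'a"
    and \<mu> \<gamma> :: "int \<Rightarrow> real"
  assumes A_inv: "\<And>n. \<exists>B. A n o\<^sub>L B = id_blinfun \<and> B o\<^sub>L A n = id_blinfun"
    and mu_nonneg: "\<And>n. \<mu> n \<ge> 0"
    and gamma_nonneg: "\<And>n. \<gamma> n \<ge> 0"
    and f_bdd: "\<And>n x. norm (f n x) \<le> \<mu> n"
    and f_lip: "\<And>n x1 x2. norm (f n x1 - f n x2) \<le> \<gamma> n * norm (x1 - x2)"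
    and sum_mu: "\<exists>M. \<forall>m. (\<lambda>n. norm (green A P m n) * \<mu> (n - 1)) summable_on UNIV
                    \<and> (\<Sum>\<^sub>\<infinity>n. norm (green A P m n) * \<mu> (n - 1)) \<le> M"
    and sum_gamma: "\<exists>q<1. \<forall>m. (\<lambda>n. norm (green A P m n) * \<gamma> (n - 1)) summable_on UNIV
                    \<and> (\<Sum>\<^sub>\<infinity>n. norm (green A P m n) * \<gamma> (n - 1)) \<le> q"
    and inv_gamma: "\<And>n. norm (binv (A n)) * \<gamma> n < 1"
    and f_C1: "\<And>n. C1 (f n)"
    and cond: "\<And>n.
       (\<lambda>k. norm (green A P n (k + 1)) * \<gamma> k *
             (\<Prod>j\<in>{k..n-1}. norm (binv (A j)) / (1 - \<gamma> j * norm (binv (A j))))) summable_on {..<n}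
     \<and> (\<lambda>k. norm (green A P n (k + 1)) * \<gamma> k *
             (\<Prod>j\<in>{n..k-1}. norm (A j) + \<gamma> j)) summable_on {n<..}
     \<and> (\<Sum>\<^sub>\<infinity>k\<in>{..<n}. norm (green A P n (k + 1)) * \<gamma> k *
             (\<Prod>j\<in>{k..n-1}. norm (binv (A j)) / (1 - \<gamma> j * norm (binv (A j)))))
       + (\<Sum>\<^sub>\<infinity>k\<in>{n<..}. norm (green A P n (k + 1)) * \<gamma> k *
             (\<Prod>j\<in>{n..k-1}. norm (A j) + \<gamma> j))
       + norm (green A P n (n + 1)) * \<gamma> n < 1"
  shows "\<forall>n. C1 (H A P f n) \<and> C1 (Hbar A P f n)"
proof (intro allI)
  fix n
  interpret lipschitz_perturbed_system A f \<gamma>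
    using A_inv gamma_nonneg f_lip inv_gamma f_C1 by unfold_locales
  note growth = green_growth_sum_lt_1[OF cond[of n]]
  have "(\<lambda>k. norm (green A P n (k + 1)) * \<mu> (k + 1 - 1)) summable_on UNIV"
    using sum_mu by (intro summable_on_int_shift[where g="\<lambda>k. norm (green A P n k) * \<mu> (k - 1)"]) blast
  then have "C1_deriv_bounded (hbar A P f n)
               (\<Sum>\<^sub>\<infinity>k. norm (green A P n (k + 1)) * \<gamma> k * orbit_growth A \<gamma> n k)"
    by (intro C1_deriv_bounded_hbar[OF f_bdd _ growth(1)]) simp
  from C1_id_plus_contraction[OF this growth(2)]
  show "C1 (H A P f n) \<and> C1 (Hbar A P f n)"
    by (simp add: H_def Hbar_def[abs_def])
qed

end
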